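(* Let $(\Omega,\mathcal{F})$ be a measurable space, $\mathcal{P}$ a nonempty set of probability measures on $(\Omega,\mathcal{F})$, and $\hat{\mathbb{E}}[Z]=\sup_{P\in\mathcal{P}}E_P[Z]$. Let $X,Y$ be random variables with $\hat{\mathbb{E}}[X^2]+\hat{\mathbb{E}}[Y^2]<\infty$. Then (1) $\overline{C}(X,Y)=\sup_{P\in\mathrm{co}(\mathcal{P})}C_P(X,Y)$; (2) $\underline{C}(X,Y)=\inf_{P\in\mathrm{co}(\mathcal{P})}C_P(X,Y)$.
   Context: $\mathrm{co}(\mathcal{P})$ denotes the convex hull of $\mathcal{P}$ (finite convex combinations of elements of $\mathcal{P}$). For a random variable $Z$ with $\hat{\mathbb{E}}[Z^2]<\infty$: upper mean $\overline{\mu}_Z=\hat{\mathbb{E}}[Z]$, lower mean $\underline{\mu}_Z=-\hat{\mathbb{E}}[-Z]$, and $M_Z=[\underline{\mu}_Z,\overline{\mu}_Z]$. The upper covariance is $\overline{C}(X,Y)=\max_{\mu_2\in M_Y}\min_{\mu_1\in M_X}\hat{\mathbb{E}}[(X-\mu_1)(Y-\mu_2)]$ and the lower covariance is $\underline{C}(X,Y)=\min_{\mu_2\in M_Y}\max_{\mu_1\in M_X}\left(-\hat{\mathbb{E}}[-(X-\mu_1)(Y-\mu_2)]\right)$. For a probability measure $P$, $C_P(X,Y)=E_P[(X-E_P[X])(Y-E_P[Y])]$. *)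

theory Defs
  imports "HOL-Probability.Probability"
begin

definition upper_exp :: "'a measure set \<Rightarrow> ('a \<Rightarrow> real) \<Rightarrow> real" where
  "upper_exp Ps Z = (SUP P\<in>Ps. integral\<^sup>L P Z)"

definition lower_exp :: "'a measure set \<Rightarrow> ('a \<Rightarrow> real) \<Rightarrow> real" where
  "lower_exp Ps Z = - upper_exp Ps (\<lambda>\<omega>. - Z \<omega>)"

definition mean_interval :: "'a measure set \<Rightarrow> ('a \<Rightarrow> real) \<Rightarrow> real set" where
  "mean_interval Ps Z = {lower_exp Ps Z .. upper_exp Ps Z}"

text \<open>Upper covariance: max over mu2 in M_Y of min over mu1 in M_X of E^[(X-mu1)(Y-mu2)].
  The extrema are attained (continuity on compact intervals), so Sup/Inf are used.\<close>
definition upper_cov :: "'a measure set \<Rightarrow> ('a \<Rightarrow> real) \<Rightarrow> ('a \<Rightarrow> real) \<Rightarrow> real" where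
  "upper_cov Ps X Y = (SUP \<mu>2\<in>mean_interval Ps Y. INF \<mu>1\<in>mean_interval Ps X.
      upper_exp Ps (\<lambda>\<omega>. (X \<omega> - \<mu>1) * (Y \<omega> - \<mu>2)))"

definition lower_cov :: "'a measure set \<Rightarrow> ('a \<Rightarrow> real) \<Rightarrow> ('a \<Rightarrow> real) \<Rightarrow> real" where
  "lower_cov Ps X Y = (INF \<mu>2\<in>mean_interval Ps Y. SUP \<mu>1\<in>mean_interval Ps X.
      - upper_exp Ps (\<lambda>\<omega>. - ((X \<omega> - \<mu>1) * (Y \<omega> - \<mu>2))))"

definition cov_P :: "'a measure \<Rightarrow> ('a \<Rightarrow> real) \<Rightarrow> ('a \<Rightarrow> real) \<Rightarrow> real" where
  "cov_P P X Y = integral\<^sup>L P (\<lambda>\<omega>. (X \<omega> - integral\<^sup>L P X) * (Y \<omega> - integral\<^sup>L P Y))"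

definition mixture :: "'a measure \<Rightarrow> 'a measure set \<Rightarrow> ('a measure \<Rightarrow> real) \<Rightarrow> 'a measure" where
  "mixture M S w = measure_of (space M) (sets M)
      (\<lambda>A. \<Sum>P\<in>S. ennreal (w P) * emeasure P A)"

definition measure_co :: "'a measure \<Rightarrow> 'a measure set \<Rightarrow> 'a measure set" where
  "measure_co M Ps = {mixture M S w | S w. finite S \<and> S \<noteq> {} \<and> S \<subseteq> Ps
      \<and> (\<forall>P\<in>S. 0 \<le> w P) \<and> sum w S = 1}"

end

theory Submission
  imports Defs
begin

(* E_P[(X - u)(Y - v)] = E_P[XY] - u E_P[Y] - v E_P[X] + u v depends on P only through the
   moments (E_P X, E_P Y, E_P XY), which are affine under mixing, so everything reduces to a
   minimax identity for a bounded family of moment vectors.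
   If Q is a mixture with means m_X, m_Y, then C_Q(X, Y) = E_Q[(X - u)(Y - m_Y)] for every u,
   which is at most the upper expectation; since m_Y lies in M_Y this bounds C_Q by the upper
   covariance. Conversely, for fixed v the map u -> upper expectation is a supremum of affine
   functions, and a separating hyperplane in R^2 gives a mixture Q that is almost optimal at
   both endpoints a, b of M_X simultaneously. Evaluating at u = b if m_Y >= v and at u = a
   otherwise makes the correction term (m_X - u)(m_Y - v) nonpositive, so C_Q comes within any
   epsilon of the infimum over u in M_X. The lower covariance follows by applying this to -Y. *)

definition convex_weights :: "'m set \<Rightarrow> 'm set \<Rightarrow> ('m \<Rightarrow> real) \<Rightarrow> bool" where
  "convex_weights A S w \<longleftrightarrow> finite S \<and> S \<noteq> {} \<and> S \<subseteq> A \<and> (\<forall>P\<in>S. 0 \<le> w P) \<and> sum w S = 1"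

lemma measure_co_eq_image:
  "measure_co M Ps = (\<lambda>(S, w). mixture M S w) ` {(S, w). convex_weights Ps S w}"
  unfolding measure_co_def convex_weights_def by auto

lemma convex_sum_le:
  assumes "convex_weights A S w" "\<And>P. P \<in> S \<Longrightarrow> h P \<le> c"
  shows "(\<Sum>P\<in>S. w P * h P) \<le> c"
proof -
  have "(\<Sum>P\<in>S. w P * h P) \<le> (\<Sum>P\<in>S. w P * c)"
    using assms by (intro sum_mono mult_left_mono) (auto simp: convex_weights_def)
  also have "\<dots> = c"
    using assms(1) by (simp add: convex_weights_def flip: sum_distrib_right)
  finally show ?thesis .
qed

lemma convex_sum_ge:
  assumes "convex_weights A S w" "\<And>P. P \<in> S \<Longrightarrow> c \<le> h P"
  shows "c \<le> (\<Sum>P\<in>S. w P * h P)"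
  using convex_sum_le[OF assms(1), of "\<lambda>P. - h P" "- c"] assms(2)
  by (simp add: sum_negf)

lemma convex_sum_shifted_product:
  assumes "convex_weights A S w"
  shows "(\<Sum>P\<in>S. w P * (z P - u * y P - v * x P + u * v))
    = (\<Sum>P\<in>S. w P * z P) - u * (\<Sum>P\<in>S. w P * y P) - v * (\<Sum>P\<in>S. w P * x P) + u * v"
  using assms
  by (simp add: convex_weights_def algebra_simps sum.distrib sum_subtractf
      flip: sum_distrib_left sum_distrib_right)

lemma nonneg_if_bounded_below_on_ray:
  fixes a c \<beta> :: real
  assumes "\<And>r. 0 \<le> r \<Longrightarrow> \<beta> \<le> c + a * r"
  shows "0 \<le> a"
proof (rule ccontr)
  assume "\<not> 0 \<le> a"
  then have "\<beta> \<le> c + a * ((\<bar>c - \<beta>\<bar> + 1) / - a)"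
    by (intro assms) (simp add: divide_nonneg_neg)
  also have "\<dots> = c - \<bar>c - \<beta>\<bar> - 1"
    using \<open>\<not> 0 \<le> a\<close> by (simp add: field_simps)
  finally show False by linarith
qed

section \<open>Finite mixtures of measures\<close>

lemma sets_mixture [simp]: "sets (mixture M S w) = sets M"
  and space_mixture [simp]: "space (mixture M S w) = space M"
  unfolding mixture_def by (simp_all add: sets.space_closed)

lemma emeasure_mixture:
  assumes "finite S" and sets_S: "\<And>P. P \<in> S \<Longrightarrow> sets P = sets M" and "A \<in> sets M"
  shows "emeasure (mixture M S w) A = (\<Sum>P\<in>S. ennreal (w P) * emeasure P A)"
  unfolding mixture_def
proof (rule emeasure_measure_of_sigma[OF sets.sigma_algebra_axioms _ _ \<open>A \<in> sets M\<close>])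
  show "positive (sets M) (\<lambda>A. \<Sum>P\<in>S. ennreal (w P) * emeasure P A)"
    by (simp add: positive_def)
  show "countably_additive (sets M) (\<lambda>A. \<Sum>P\<in>S. ennreal (w P) * emeasure P A)"
  proof (rule countably_additiveI)
    fix B :: "nat \<Rightarrow> 'a set"
    assume B: "range B \<subseteq> sets M" "disjoint_family B"
    have "(\<Sum>i. \<Sum>P\<in>S. ennreal (w P) * emeasure P (B i))
        = (\<Sum>P\<in>S. ennreal (w P) * (\<Sum>i. emeasure P (B i)))"
      by (simp add: suminf_sum summableI)
    also have "\<dots> = (\<Sum>P\<in>S. ennreal (w P) * emeasure P (\<Union> (range B)))"
      using B sets_S by (intro sum.cong refl) (simp add: suminf_emeasure)
    finally show "(\<Sum>i. \<Sum>P\<in>S. ennreal (w P) * emeasure P (B i))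
        = (\<Sum>P\<in>S. ennreal (w P) * emeasure P (\<Union> (range B)))" .
  qed
qed

lemma nn_integral_mixture:
  assumes "finite S" and sets_S: "\<And>P. P \<in> S \<Longrightarrow> sets P = sets M"
    and "f \<in> borel_measurable M"
  shows "integral\<^sup>N (mixture M S w) f = (\<Sum>P\<in>S. ennreal (w P) * integral\<^sup>N P f)"
  using \<open>f \<in> borel_measurable M\<close>
proof induction
  case (cong f g)
  with sets_S show ?case
    by (simp cong: nn_integral_cong_simp sum.cong
        add: sets_eq_imp_space_eq[OF sets_S] cong.hyps)
next
  case (set A)
  with sets_S show ?case
    by (simp add: emeasure_mixture[OF \<open>finite S\<close> sets_S])
next
  case (mult u c)
  with sets_S show ?case
    by (simp add: nn_integral_cmult sum_distrib_left ac_simps cong: measurable_cong_sets)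
next
  case (add u v)
  with sets_S show ?case
    by (simp add: nn_integral_add distrib_left sum.distrib cong: measurable_cong_sets)
next
  case (seq U)
  have "incseq (\<lambda>i. ennreal (w P) * integral\<^sup>N P (U i))" if "P \<in> S" for P
    using seq.hyps(3) by (auto simp: incseq_def le_fun_def intro!: mult_left_mono nn_integral_mono)
  with seq sets_S show ?case
    by (simp add: nn_integral_monotone_convergence_SUP image_comp ennreal_SUP_sum
        SUP_mult_left_ennreal cong: measurable_cong_sets)
qed

lemma
  fixes f :: "'a \<Rightarrow> real"
  assumes "finite S" and sets_S: "\<And>P. P \<in> S \<Longrightarrow> sets P = sets M"
    and w_nonneg: "\<And>P. P \<in> S \<Longrightarrow> 0 \<le> w P"
    and f_meas: "f \<in> borel_measurable M" and f_int: "\<And>P. P \<in> S \<Longrightarrow> integrable P f"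
  shows integrable_mixture: "integrable (mixture M S w) f"
    and integral_mixture: "integral\<^sup>L (mixture M S w) f = (\<Sum>P\<in>S. w P * integral\<^sup>L P f)"
proof -
  note nn_mix = nn_integral_mixture[OF \<open>finite S\<close> sets_S]
  have finite_nn: "(\<integral>\<^sup>+x. ennreal (g (f x)) \<partial>P) < \<infinity>"
    if "P \<in> S" and "\<And>t. g t \<le> norm t" for P g
  proof -
    have "(\<integral>\<^sup>+x. ennreal (g (f x)) \<partial>P) \<le> (\<integral>\<^sup>+x. ennreal (norm (f x)) \<partial>P)"
      using that(2) by (intro nn_integral_mono) (simp add: ennreal_leI)
    also have "\<dots> < \<infinity>"
      using f_int[OF that(1)] by (simp add: integrable_iff_bounded)
    finally show ?thesis .
  qed
  have "(\<integral>\<^sup>+x. ennreal (norm (f x)) \<partial>mixture M S w) < \<infinity>"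
    using f_meas finite_nn[of _ norm] \<open>finite S\<close>
    by (simp add: nn_mix ennreal_mult_less_top)
  then show int: "integrable (mixture M S w) f"
    using f_meas by (simp add: integrable_iff_bounded cong: measurable_cong_sets)
  have "(\<lambda>x. ennreal (f x)) \<in> borel_measurable M" "(\<lambda>x. ennreal (- f x)) \<in> borel_measurable M"
    using f_meas by measurable
  then have "integral\<^sup>L (mixture M S w) f
      = enn2real (\<Sum>P\<in>S. ennreal (w P) * (\<integral>\<^sup>+x. ennreal (f x) \<partial>P))
      - enn2real (\<Sum>P\<in>S. ennreal (w P) * (\<integral>\<^sup>+x. ennreal (- f x) \<partial>P))"
    unfolding real_lebesgue_integral_def[OF int] by (simp only: nn_mix)
  also have "\<dots> = (\<Sum>P\<in>S. w P * (enn2real (\<integral>\<^sup>+x. ennreal (f x) \<partial>P)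
      - enn2real (\<integral>\<^sup>+x. ennreal (- f x) \<partial>P)))"
    using finite_nn[of _ "\<lambda>t. t"] finite_nn[of _ uminus] w_nonneg
    by (simp add: enn2real_sum ennreal_mult_less_top enn2real_mult right_diff_distrib
        sum_subtractf)
  also have "\<dots> = (\<Sum>P\<in>S. w P * integral\<^sup>L P f)"
    using f_int by (simp add: real_lebesgue_integral_def)
  finally show "integral\<^sup>L (mixture M S w) f = (\<Sum>P\<in>S. w P * integral\<^sup>L P f)" .
qed

lemma prob_space_mixture:
  assumes "convex_weights Ps S w"
    and Ps_prob: "\<And>P. P \<in> Ps \<Longrightarrow> prob_space P \<and> sets P = sets M"
  shows "prob_space (mixture M S w)"
proof
  have S: "finite S" "S \<subseteq> Ps" "\<forall>P\<in>S. 0 \<le> w P" "sum w S = 1"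
    using assms(1) unfolding convex_weights_def by auto
  with Ps_prob have "emeasure (mixture M S w) (space M)
      = (\<Sum>P\<in>S. ennreal (w P) * emeasure P (space M))"
    by (intro emeasure_mixture) auto
  also have "\<dots> = (\<Sum>P\<in>S. ennreal (w P))"
    using S Ps_prob
    by (intro sum.cong refl) (metis mult_1_right prob_space.emeasure_space_1 sets_eq_imp_space_eq subsetD)
  also have "\<dots> = 1"
    using S by (subst sum_ennreal) auto
  finally show "emeasure (mixture M S w) (space (mixture M S w)) = 1" by simp
qed

lemma abs_integral_le_integral:
  fixes f g :: "'a \<Rightarrow> real"
  assumes "integrable M f" "integrable M g" "\<And>x. x \<in> space M \<Longrightarrow> \<bar>f x\<bar> \<le> g x"
  shows "\<bar>integral\<^sup>L M f\<bar> \<le> integral\<^sup>L M g"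
proof -
  have "integral\<^sup>L M f \<le> integral\<^sup>L M g"
    using assms by (intro integral_mono) (auto simp: abs_le_iff)
  moreover have "integral\<^sup>L M (\<lambda>x. - f x) \<le> integral\<^sup>L M g"
    using assms by (intro integral_mono) (auto simp: abs_le_iff)
  ultimately show ?thesis by simp
qed

lemma integrable_mult_of_square_integrable:
  fixes X Y :: "'a \<Rightarrow> real"
  assumes "X \<in> borel_measurable M" "Y \<in> borel_measurable M"
    and "integrable M (\<lambda>\<omega>. (X \<omega>)\<^sup>2)" "integrable M (\<lambda>\<omega>. (Y \<omega>)\<^sup>2)"
  shows "integrable M (\<lambda>\<omega>. X \<omega> * Y \<omega>)"
    and "\<bar>\<integral>\<omega>. X \<omega> * Y \<omega> \<partial>M\<bar> \<le> (\<integral>\<omega>. (X \<omega>)\<^sup>2 \<partial>M) + (\<integral>\<omega>. (Y \<omega>)\<^sup>2 \<partial>M)"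
proof -
  have bound: "\<bar>x * y\<bar> \<le> x\<^sup>2 + y\<^sup>2" for x y :: real
  proof -
    have "2 * (\<bar>x\<bar> * \<bar>y\<bar>) \<le> x\<^sup>2 + y\<^sup>2"
      using sum_squares_bound[of "\<bar>x\<bar>" "\<bar>y\<bar>"] by (simp add: mult.assoc)
    moreover have "0 \<le> \<bar>x\<bar> * \<bar>y\<bar>" by simp
    ultimately show ?thesis unfolding abs_mult by linarith
  qed
  have sum_int: "integrable M (\<lambda>\<omega>. (X \<omega>)\<^sup>2 + (Y \<omega>)\<^sup>2)"
    using assms by simp
  show int: "integrable M (\<lambda>\<omega>. X \<omega> * Y \<omega>)"
    using assms bound by (intro Bochner_Integration.integrable_bound[OF sum_int]) auto
  show "\<bar>\<integral>\<omega>. X \<omega> * Y \<omega> \<partial>M\<bar> \<le> (\<integral>\<omega>. (X \<omega>)\<^sup>2 \<partial>M) + (\<integral>\<omega>. (Y \<omega>)\<^sup>2 \<partial>M)"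
    using abs_integral_le_integral[OF int sum_int] bound assms by simp
qed

lemma (in prob_space) abs_expectation_le_second_moment:
  fixes X :: "'a \<Rightarrow> real"
  assumes "X \<in> borel_measurable M" "integrable M (\<lambda>\<omega>. (X \<omega>)\<^sup>2)"
  shows "\<bar>expectation X\<bar> \<le> 1 + expectation (\<lambda>\<omega>. (X \<omega>)\<^sup>2)"
proof -
  have "\<bar>x\<bar> \<le> 1 + x\<^sup>2" for x :: real
    using sum_squares_bound[of "\<bar>x\<bar>" 1] by simp
  then have "\<bar>expectation X\<bar> \<le> expectation (\<lambda>\<omega>. 1 + (X \<omega>)\<^sup>2)"
    using assms square_integrable_imp_integrable
    by (intro abs_integral_le_integral) auto
  then show ?thesis
    using assms by (simp add: prob_space)
qed

lemma (in prob_space) expectation_shifted_product: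
  fixes X Y :: "'a \<Rightarrow> real"
  assumes "integrable M X" "integrable M Y" "integrable M (\<lambda>\<omega>. X \<omega> * Y \<omega>)"
  shows "expectation (\<lambda>\<omega>. (X \<omega> - u) * (Y \<omega> - v))
    = expectation (\<lambda>\<omega>. X \<omega> * Y \<omega>) - u * expectation Y - v * expectation X + u * v"
proof -
  have "(\<lambda>\<omega>. (X \<omega> - u) * (Y \<omega> - v)) = (\<lambda>\<omega>. X \<omega> * Y \<omega> - u * Y \<omega> - v * X \<omega> + u * v)"
    by (simp add: fun_eq_iff algebra_simps)
  then show ?thesis
    using assms by (simp add: prob_space)
qed

lemma cov_P_eq:
  fixes X Y :: "'a \<Rightarrow> real"
  assumes "prob_space P" "integrable P X" "integrable P Y" "integrable P (\<lambda>\<omega>. X \<omega> * Y \<omega>)"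
  shows "cov_P P X Y = integral\<^sup>L P (\<lambda>\<omega>. X \<omega> * Y \<omega>) - integral\<^sup>L P X * integral\<^sup>L P Y"
  using prob_space.expectation_shifted_product[OF assms] by (simp add: cov_P_def)

section \<open>A minimax identity for shifted products\<close>

lemma convex_hull_meets_quadrant:
  fixes Z :: "(real \<times> real) set"
  assumes "Z \<noteq> {}" "0 < \<epsilon>"
    and sup_ge: "\<And>t. t \<in> {0..1} \<Longrightarrow> V \<le> (SUP z\<in>Z. (1 - t) * fst z + t * snd z)"
  shows "\<exists>y\<in>convex hull Z. V - \<epsilon> \<le> fst y \<and> V - \<epsilon> \<le> snd y"
proof (rule ccontr)
  define Q where "Q = {V - \<epsilon>..} \<times> {V - \<epsilon>..}"
  assume "\<not> ?thesis"
  then have "convex hull Z \<inter> Q = {}"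
    unfolding Q_def by force
  moreover have "convex Q"
    unfolding Q_def by (intro convex_Times convex_real_interval)
  moreover have "convex hull Z \<noteq> {}" "Q \<noteq> {}"
    using \<open>Z \<noteq> {}\<close> by (auto simp: Q_def)
  ultimately obtain a \<beta> where "a \<noteq> 0"
    and hull_le: "\<forall>h\<in>convex hull Z. inner a h \<le> \<beta>"
    and Q_ge: "\<forall>q\<in>Q. \<beta> \<le> inner a q"
    using separating_hyperplane_sets[OF convex_convex_hull] by meson
  \<comment> \<open>\<open>Q\<close> is unbounded upwards in both coordinates, so the normal \<open>a\<close> is nonnegative\<close>
  obtain a1 a2 where a: "a = (a1, a2)" by fastforce
  have corner: "\<beta> \<le> (a1 + a2) * (V - \<epsilon>) + a1 * r + a2 * s" if "0 \<le> r" "0 \<le> s" for r s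
    using Q_ge[rule_format, of "(V - \<epsilon> + r, V - \<epsilon> + s)"] that by (simp add: Q_def a algebra_simps)
  have "0 \<le> a1" "0 \<le> a2"
    using corner[of _ 0] corner[of 0] by (auto intro: nonneg_if_bounded_below_on_ray)
  with \<open>a \<noteq> 0\<close> have "0 < a1 + a2"
    by (auto simp: a zero_prod_def)
  define t where "t = a2 / (a1 + a2)"
  have "t \<in> {0..1}"
    using \<open>0 \<le> a1\<close> \<open>0 \<le> a2\<close> \<open>0 < a1 + a2\<close> by (simp add: t_def)
  have "(SUP z\<in>Z. (1 - t) * fst z + t * snd z) \<le> V - \<epsilon>"
  proof (rule cSUP_least[OF \<open>Z \<noteq> {}\<close>])
    fix z assume "z \<in> Z"
    then have "a1 * fst z + a2 * snd z \<le> (a1 + a2) * (V - \<epsilon>)"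
      using hull_le[rule_format, of z] corner[of 0 0] by (auto simp: a hull_inc inner_prod_def)
    moreover have "(1 - t) * fst z + t * snd z = (a1 * fst z + a2 * snd z) / (a1 + a2)"
      using \<open>0 < a1 + a2\<close> by (simp add: t_def divide_simps)
    ultimately show "(1 - t) * fst z + t * snd z \<le> V - \<epsilon>"
      using \<open>0 < a1 + a2\<close> by (simp add: pos_divide_le_eq mult.commute)
  qed
  with sup_ge[OF \<open>t \<in> {0..1}\<close>] \<open>0 < \<epsilon>\<close> show False
    by linarith
qed

lemma convex_weights_of_convex_hull_image:
  fixes f :: "'m \<Rightarrow> 'v::real_vector"
  assumes "y \<in> convex hull (f ` A)"
  shows "\<exists>S w. convex_weights A S w \<and> y = (\<Sum>P\<in>S. w P *\<^sub>R f P)"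
proof -
  obtain T u where T: "finite T" "T \<subseteq> f ` A" "\<forall>z\<in>T. 0 \<le> u z" "sum u T = 1"
    and y: "y = (\<Sum>z\<in>T. u z *\<^sub>R z)"
    using assms unfolding convex_hull_explicit by blast
  have "\<forall>z\<in>T. \<exists>P\<in>A. f P = z"
    using T(2) by blast
  then obtain g where g: "\<And>z. z \<in> T \<Longrightarrow> g z \<in> A \<and> f (g z) = z"
    by metis
  then have "inj_on g T"
    by (metis inj_onI)
  define w where "w P = u (f P)" for P
  have reindex: "(\<Sum>P\<in>g ` T. h P) = (\<Sum>z\<in>T. h (g z))" for h :: "'m \<Rightarrow> 'b::comm_monoid_add"
    using \<open>inj_on g T\<close> by (simp add: sum.reindex)
  have "convex_weights A (g ` T) w"
    using T g by (auto simp: convex_weights_def reindex w_def)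
  moreover have "y = (\<Sum>P\<in>g ` T. w P *\<^sub>R f P)"
    using g by (simp add: reindex y w_def)
  ultimately show ?thesis by blast
qed

lemma two_function_minimax:
  fixes p q :: "'m \<Rightarrow> real"
  assumes "Ps \<noteq> {}" "0 < \<epsilon>"
    and "\<And>t. t \<in> {0..1} \<Longrightarrow> V \<le> (SUP P\<in>Ps. (1 - t) * p P + t * q P)"
  shows "\<exists>S w. convex_weights Ps S w
    \<and> V - \<epsilon> \<le> (\<Sum>P\<in>S. w P * p P) \<and> V - \<epsilon> \<le> (\<Sum>P\<in>S. w P * q P)"
proof -
  have "\<exists>y\<in>convex hull ((\<lambda>P. (p P, q P)) ` Ps). V - \<epsilon> \<le> fst y \<and> V - \<epsilon> \<le> snd y"
    using assms by (intro convex_hull_meets_quadrant) (auto simp: image_image)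
  then obtain y where y: "y \<in> convex hull ((\<lambda>P. (p P, q P)) ` Ps)" "V - \<epsilon> \<le> fst y" "V - \<epsilon> \<le> snd y"
    by blast
  obtain S w where "convex_weights Ps S w" and "y = (\<Sum>P\<in>S. w P *\<^sub>R (p P, q P))"
    using convex_weights_of_convex_hull_image[OF y(1)] by blast
  moreover from this(2) have "fst y = (\<Sum>P\<in>S. w P * p P)" "snd y = (\<Sum>P\<in>S. w P * q P)"
    by (simp_all add: fst_sum snd_sum)
  ultimately show ?thesis
    using y(2,3) by auto
qed

(* With x P = E_P X, y P = E_P Y and z P = E_P[XY], upper_cov_of_moments is the upper
   covariance and mixed_cov S w is the covariance under the mixture of the P in S with weights w. *)

definition upper_cov_of_moments :: "'m set \<Rightarrow> ('m \<Rightarrow> real) \<Rightarrow> ('m \<Rightarrow> real) \<Rightarrow> ('m \<Rightarrow> real) \<Rightarrow> real"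
  where "upper_cov_of_moments Ps x y z =
    (SUP v\<in>{(INF P\<in>Ps. y P)..(SUP P\<in>Ps. y P)}. INF u\<in>{(INF P\<in>Ps. x P)..(SUP P\<in>Ps. x P)}.
      SUP P\<in>Ps. z P - u * y P - v * x P + u * v)"

definition mixed_cov :: "'m set \<Rightarrow> ('m \<Rightarrow> real) \<Rightarrow> ('m \<Rightarrow> real) \<Rightarrow> ('m \<Rightarrow> real) \<Rightarrow> ('m \<Rightarrow> real) \<Rightarrow> real"
  where "mixed_cov S w x y z = (\<Sum>P\<in>S. w P * z P) - (\<Sum>P\<in>S. w P * x P) * (\<Sum>P\<in>S. w P * y P)"

lemma mixed_cov_le_Sup_shifted_product:
  fixes x y z :: "'m \<Rightarrow> real"
  assumes "convex_weights Ps S w" and v: "v = (\<Sum>P\<in>S. w P * y P)"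
    and "bdd_above ((\<lambda>P. z P - u * y P - v * x P + u * v) ` Ps)"
  shows "mixed_cov S w x y z \<le> (SUP P\<in>Ps. z P - u * y P - v * x P + u * v)"
proof -
  have "mixed_cov S w x y z = (\<Sum>P\<in>S. w P * (z P - u * y P - v * x P + u * v))"
    unfolding convex_sum_shifted_product[OF assms(1)] v mixed_cov_def by (simp add: algebra_simps)
  also have "\<dots> \<le> (SUP P\<in>Ps. z P - u * y P - v * x P + u * v)"
    using assms(1,3) by (intro convex_sum_le cSUP_upper) (auto simp: convex_weights_def)
  finally show ?thesis .
qed

lemma ex_mixed_cov_ge_Inf_Sup_shifted_product:
  fixes x y z :: "'m \<Rightarrow> real"
  assumes "Ps \<noteq> {}" "0 < \<epsilon>" and x_in: "\<And>P. P \<in> Ps \<Longrightarrow> x P \<in> {a..b}"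
    and V_le: "\<And>u. u \<in> {a..b} \<Longrightarrow> V \<le> (SUP P\<in>Ps. z P - u * y P - v * x P + u * v)"
  shows "\<exists>S w. convex_weights Ps S w \<and> V - \<epsilon> \<le> mixed_cov S w x y z"
proof -
  define g where "g P u = z P - u * y P - v * x P + u * v" for P u
  have "a \<le> b"
    using x_in \<open>Ps \<noteq> {}\<close> by fastforce
  have endpoints: "V \<le> (SUP P\<in>Ps. (1 - t) * g P a + t * g P b)" if "t \<in> {0..1}" for t
  proof -
    have "0 \<le> t * (b - a)" "t * (b - a) \<le> b - a"
      using \<open>a \<le> b\<close> that mult_left_le[of t "b - a"] by (auto simp: mult.commute)
    then have "(1 - t) * a + t * b \<in> {a..b}"
      by (auto simp: algebra_simps)
    then show ?thesis
      using V_le[of "(1 - t) * a + t * b"] by (simp add: g_def algebra_simps)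
  qed
  obtain S w where w: "convex_weights Ps S w"
    and ga: "V - \<epsilon> \<le> (\<Sum>P\<in>S. w P * g P a)" and gb: "V - \<epsilon> \<le> (\<Sum>P\<in>S. w P * g P b)"
    using two_function_minimax[OF \<open>Ps \<noteq> {}\<close> \<open>0 < \<epsilon>\<close> endpoints] by blast
  define X Y Z where "X = (\<Sum>P\<in>S. w P * x P)" "Y = (\<Sum>P\<in>S. w P * y P)" "Z = (\<Sum>P\<in>S. w P * z P)"
  have "X \<in> {a..b}"
    using w x_in by (auto simp: X_Y_Z_def convex_weights_def intro!: convex_sum_le convex_sum_ge)
  have cov_eq: "Z - X * Y = (\<Sum>P\<in>S. w P * g P u) - (X - u) * (Y - v)" for u
    unfolding g_def convex_sum_shifted_product[OF w] X_Y_Z_def by (simp add: algebra_simps)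
  \<comment> \<open>pick the endpoint that makes the correction term \<open>(X - u) * (Y - v)\<close> nonpositive\<close>
  have "V - \<epsilon> \<le> Z - X * Y"
  proof (cases "v \<le> Y")
    case True
    with \<open>X \<in> {a..b}\<close> have "(X - b) * (Y - v) \<le> 0"
      by (intro mult_nonpos_nonneg) auto
    with gb show ?thesis unfolding cov_eq[of b] by linarith
  next
    case False
    with \<open>X \<in> {a..b}\<close> have "(X - a) * (Y - v) \<le> 0"
      by (intro mult_nonneg_nonpos) auto
    with ga show ?thesis unfolding cov_eq[of a] by linarith
  qed
  with w show ?thesis
    unfolding X_Y_Z_def mixed_cov_def by blast
qed

lemma abs_shifted_product_le:
  fixes x y z u v K :: real
  assumes "\<bar>x\<bar> \<le> K" "\<bar>y\<bar> \<le> K" "\<bar>z\<bar> \<le> K" "\<bar>u\<bar> \<le> K" "\<bar>v\<bar> \<le> K"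
  shows "\<bar>z - u * y - v * x + u * v\<bar> \<le> K + 3 * K\<^sup>2"
proof -
  have "\<bar>u * y\<bar> \<le> K\<^sup>2" "\<bar>v * x\<bar> \<le> K\<^sup>2" "\<bar>u * v\<bar> \<le> K\<^sup>2"
    using assms by (auto simp: abs_mult power2_eq_square intro!: mult_mono)
  with assms(3) show ?thesis by linarith
qed

lemma
  fixes f :: "'m \<Rightarrow> real"
  assumes "A \<noteq> {}" "\<forall>P\<in>A. \<bar>f P\<bar> \<le> K"
  shows mem_Inf_Sup_interval: "\<And>P. P \<in> A \<Longrightarrow> f P \<in> {(INF P\<in>A. f P)..(SUP P\<in>A. f P)}"
    and Inf_Sup_interval_subset: "{(INF P\<in>A. f P)..(SUP P\<in>A. f P)} \<subseteq> {-K..K}"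
proof -
  have bounds: "-K \<le> f P" "f P \<le> K" if "P \<in> A" for P
    using assms(2) that by fastforce+
  then have "bdd_above (f ` A)" "bdd_below (f ` A)"
    by (auto intro!: bdd_aboveI2[where M=K] bdd_belowI2[where m="-K"])
  then show "\<And>P. P \<in> A \<Longrightarrow> f P \<in> {(INF P\<in>A. f P)..(SUP P\<in>A. f P)}"
    by (auto intro: cINF_lower cSUP_upper)
  have "-K \<le> (INF P\<in>A. f P)" "(SUP P\<in>A. f P) \<le> K"
    using assms(1) bounds by (auto intro!: cINF_greatest cSUP_least)
  then show "{(INF P\<in>A. f P)..(SUP P\<in>A. f P)} \<subseteq> {-K..K}"
    by auto
qed

lemma Sup_shifted_product_bounded:
  fixes x y z :: "'m \<Rightarrow> real"
  assumes "Ps \<noteq> {}" and bounded: "\<forall>P\<in>Ps. \<bar>x P\<bar> \<le> K \<and> \<bar>y P\<bar> \<le> K \<and> \<bar>z P\<bar> \<le> K"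
    and "\<bar>u\<bar> \<le> K" "\<bar>v\<bar> \<le> K"
  shows "bdd_above ((\<lambda>P. z P - u * y P - v * x P + u * v) ` Ps)"
    and "\<bar>SUP P\<in>Ps. z P - u * y P - v * x P + u * v\<bar> \<le> K + 3 * K\<^sup>2"
proof -
  have bound: "\<bar>z P - u * y P - v * x P + u * v\<bar> \<le> K + 3 * K\<^sup>2" if "P \<in> Ps" for P
    using bounded that assms(3,4) by (intro abs_shifted_product_le) auto
  then show bdd: "bdd_above ((\<lambda>P. z P - u * y P - v * x P + u * v) ` Ps)"
    by (intro bdd_aboveI2[where M="K + 3 * K\<^sup>2"]) (simp add: abs_le_iff)
  obtain P0 where "P0 \<in> Ps"
    using \<open>Ps \<noteq> {}\<close> by blast
  have "z P0 - u * y P0 - v * x P0 + u * v \<le> (SUP P\<in>Ps. z P - u * y P - v * x P + u * v)"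
    using \<open>P0 \<in> Ps\<close> bdd by (rule cSUP_upper)
  moreover have "(SUP P\<in>Ps. z P - u * y P - v * x P + u * v) \<le> K + 3 * K\<^sup>2"
    using bound by (intro cSUP_least[OF \<open>Ps \<noteq> {}\<close>]) (simp add: abs_le_iff)
  ultimately show "\<bar>SUP P\<in>Ps. z P - u * y P - v * x P + u * v\<bar> \<le> K + 3 * K\<^sup>2"
    using bound[OF \<open>P0 \<in> Ps\<close>] by (simp add: abs_le_iff)
qed

lemma Inf_Sup_shifted_product_le:
  fixes x y z :: "'m \<Rightarrow> real"
  assumes "Ps \<noteq> {}" and bounded: "\<forall>P\<in>Ps. \<bar>x P\<bar> \<le> K \<and> \<bar>y P\<bar> \<le> K \<and> \<bar>z P\<bar> \<le> K"
    and "\<bar>v\<bar> \<le> K" "u \<in> {(INF P\<in>Ps. x P)..(SUP P\<in>Ps. x P)}"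
  shows "(INF u'\<in>{(INF P\<in>Ps. x P)..(SUP P\<in>Ps. x P)}. SUP P\<in>Ps. z P - u' * y P - v * x P + u' * v)
    \<le> (SUP P\<in>Ps. z P - u * y P - v * x P + u * v)"
proof (rule cINF_lower[OF _ \<open>u \<in> _\<close>])
  have "{(INF P\<in>Ps. x P)..(SUP P\<in>Ps. x P)} \<subseteq> {-K..K}"
    using bounded by (intro Inf_Sup_interval_subset[OF \<open>Ps \<noteq> {}\<close>]) auto
  then have Sup_bound: "\<bar>SUP P\<in>Ps. z P - u' * y P - v * x P + u' * v\<bar> \<le> K + 3 * K\<^sup>2"
    if "u' \<in> {(INF P\<in>Ps. x P)..(SUP P\<in>Ps. x P)}" for u'
    using that by (intro Sup_shifted_product_bounded(2)[OF \<open>Ps \<noteq> {}\<close> bounded _ \<open>\<bar>v\<bar> \<le> K\<close>]) auto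
  show "bdd_below ((\<lambda>u'. SUP P\<in>Ps. z P - u' * y P - v * x P + u' * v)
      ` {(INF P\<in>Ps. x P)..(SUP P\<in>Ps. x P)})"
  proof (rule bdd_belowI2)
    fix u' assume "u' \<in> {(INF P\<in>Ps. x P)..(SUP P\<in>Ps. x P)}"
    from Sup_bound[OF this]
    show "- (K + 3 * K\<^sup>2) \<le> (SUP P\<in>Ps. z P - u' * y P - v * x P + u' * v)"
      by (simp add: abs_le_iff)
  qed
qed

lemma mixed_cov_le_upper_cov_of_moments:
  fixes x y z :: "'m \<Rightarrow> real"
  assumes "Ps \<noteq> {}" and bounded: "\<forall>P\<in>Ps. \<bar>x P\<bar> \<le> K \<and> \<bar>y P\<bar> \<le> K \<and> \<bar>z P\<bar> \<le> K"
    and w: "convex_weights Ps S w"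
  shows "mixed_cov S w x y z \<le> upper_cov_of_moments Ps x y z"
proof -
  define I J where "I = {(INF P\<in>Ps. x P)..(SUP P\<in>Ps. x P)}" "J = {(INF P\<in>Ps. y P)..(SUP P\<in>Ps. y P)}"
  define F where "F v = (INF u\<in>I. SUP P\<in>Ps. z P - u * y P - v * x P + u * v)" for v
  have "\<forall>P\<in>Ps. \<bar>x P\<bar> \<le> K" "\<forall>P\<in>Ps. \<bar>y P\<bar> \<le> K"
    using bounded by auto
  note intervals = mem_Inf_Sup_interval[OF \<open>Ps \<noteq> {}\<close> this(1)] mem_Inf_Sup_interval[OF \<open>Ps \<noteq> {}\<close> this(2)]
    Inf_Sup_interval_subset[OF \<open>Ps \<noteq> {}\<close> this(1)] Inf_Sup_interval_subset[OF \<open>Ps \<noteq> {}\<close> this(2)]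
  then have x_in: "\<And>P. P \<in> Ps \<Longrightarrow> x P \<in> I" and y_in: "\<And>P. P \<in> Ps \<Longrightarrow> y P \<in> J"
    and IJ: "\<And>u. u \<in> I \<Longrightarrow> \<bar>u\<bar> \<le> K" "\<And>v. v \<in> J \<Longrightarrow> \<bar>v\<bar> \<le> K"
    unfolding I_J_def by (auto simp: abs_le_iff)
  obtain P0 where "P0 \<in> Ps"
    using \<open>Ps \<noteq> {}\<close> by blast
  define v where "v = (\<Sum>P\<in>S. w P * y P)"
  have "v \<in> J"
    using w y_in by (auto simp: v_def I_J_def(2) convex_weights_def intro!: convex_sum_le convex_sum_ge)
  have "mixed_cov S w x y z \<le> F v"
    unfolding F_def
  proof (rule cINF_greatest)
    show "I \<noteq> {}"
      using x_in \<open>P0 \<in> Ps\<close> by blast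
    fix u assume "u \<in> I"
    with Sup_shifted_product_bounded(1)[OF \<open>Ps \<noteq> {}\<close> bounded IJ(1) IJ(2)[OF \<open>v \<in> J\<close>]]
    show "mixed_cov S w x y z \<le> (SUP P\<in>Ps. z P - u * y P - v * x P + u * v)"
      by (simp add: mixed_cov_le_Sup_shifted_product[OF w v_def])
  qed
  also have "F v \<le> upper_cov_of_moments Ps x y z"
    unfolding upper_cov_of_moments_def I_J_def[symmetric] F_def[symmetric]
  proof (rule cSUP_upper[OF \<open>v \<in> J\<close>], rule bdd_aboveI2)
    fix v' assume "v' \<in> J"
    have "F v' \<le> (SUP P\<in>Ps. z P - x P0 * y P - v' * x P + x P0 * v')"
      using Inf_Sup_shifted_product_le[OF \<open>Ps \<noteq> {}\<close> bounded IJ(2)[OF \<open>v' \<in> J\<close>]] x_in[OF \<open>P0 \<in> Ps\<close>]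
      unfolding F_def I_J_def by blast
    also have "\<dots> \<le> K + 3 * K\<^sup>2"
      using Sup_shifted_product_bounded(2)[OF \<open>Ps \<noteq> {}\<close> bounded IJ(1)[OF x_in] IJ(2)]
        \<open>P0 \<in> Ps\<close> \<open>v' \<in> J\<close> by (simp add: abs_le_iff)
    finally show "F v' \<le> K + 3 * K\<^sup>2" .
  qed
  finally show ?thesis .
qed

lemma upper_cov_of_moments_le:
  fixes x y z :: "'m \<Rightarrow> real"
  assumes "Ps \<noteq> {}" and bounded: "\<forall>P\<in>Ps. \<bar>x P\<bar> \<le> K \<and> \<bar>y P\<bar> \<le> K \<and> \<bar>z P\<bar> \<le> K"
    and ub: "\<And>S w. convex_weights Ps S w \<Longrightarrow> mixed_cov S w x y z \<le> ub"
  shows "upper_cov_of_moments Ps x y z \<le> ub"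
  unfolding upper_cov_of_moments_def
proof (rule cSUP_least)
  have bounded_xy: "\<forall>P\<in>Ps. \<bar>x P\<bar> \<le> K" "\<forall>P\<in>Ps. \<bar>y P\<bar> \<le> K"
    using bounded by auto
  show "{(INF P\<in>Ps. y P)..(SUP P\<in>Ps. y P)} \<noteq> {}"
    using mem_Inf_Sup_interval[OF \<open>Ps \<noteq> {}\<close> bounded_xy(2)] \<open>Ps \<noteq> {}\<close> by blast
  fix v assume "v \<in> {(INF P\<in>Ps. y P)..(SUP P\<in>Ps. y P)}"
  then have "\<bar>v\<bar> \<le> K"
    using Inf_Sup_interval_subset[OF \<open>Ps \<noteq> {}\<close> bounded_xy(2)] by (auto simp: abs_le_iff)
  show "(INF u\<in>{(INF P\<in>Ps. x P)..(SUP P\<in>Ps. x P)}. SUP P\<in>Ps. z P - u * y P - v * x P + u * v) \<le> ub"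
    (is "?F \<le> ub")
  proof (rule field_le_epsilon)
    fix \<epsilon> :: real assume "0 < \<epsilon>"
    obtain S w where "convex_weights Ps S w" "?F - \<epsilon> \<le> mixed_cov S w x y z"
      using ex_mixed_cov_ge_Inf_Sup_shifted_product[OF \<open>Ps \<noteq> {}\<close> \<open>0 < \<epsilon>\<close>
          mem_Inf_Sup_interval[OF \<open>Ps \<noteq> {}\<close> bounded_xy(1)]
          Inf_Sup_shifted_product_le[OF \<open>Ps \<noteq> {}\<close> bounded \<open>\<bar>v\<bar> \<le> K\<close>]]
      by blast
    with ub show "?F \<le> ub + \<epsilon>"
      by fastforce
  qed
qed

lemma upper_cov_of_moments_eq_Sup_mixed_cov:
  fixes x y z :: "'m \<Rightarrow> real"
  assumes "Ps \<noteq> {}" and bounded: "\<forall>P\<in>Ps. \<bar>x P\<bar> \<le> K \<and> \<bar>y P\<bar> \<le> K \<and> \<bar>z P\<bar> \<le> K"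
  shows "upper_cov_of_moments Ps x y z
    = (SUP (S, w)\<in>{(S, w). convex_weights Ps S w}. mixed_cov S w x y z)"
proof (rule sym, rule cSup_eq_non_empty)
  obtain P0 where "P0 \<in> Ps"
    using \<open>Ps \<noteq> {}\<close> by blast
  then show "(\<lambda>(S, w). mixed_cov S w x y z) ` {(S, w). convex_weights Ps S w} \<noteq> {}"
    by (auto simp: convex_weights_def intro!: exI[of _ "{P0}"])
  show "c \<le> upper_cov_of_moments Ps x y z"
    if "c \<in> (\<lambda>(S, w). mixed_cov S w x y z) ` {(S, w). convex_weights Ps S w}" for c
    using that mixed_cov_le_upper_cov_of_moments[OF \<open>Ps \<noteq> {}\<close> bounded] by auto
  show "upper_cov_of_moments Ps x y z \<le> ub"
    if "\<And>c. c \<in> (\<lambda>(S, w). mixed_cov S w x y z) ` {(S, w). convex_weights Ps S w} \<Longrightarrow> c \<le> ub"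
    for ub
    using that by (intro upper_cov_of_moments_le[OF \<open>Ps \<noteq> {}\<close> bounded]) auto
qed

section \<open>Upper and lower covariance\<close>

lemma mean_interval_eq:
  "mean_interval Ps Z = {(INF P\<in>Ps. integral\<^sup>L P Z)..(SUP P\<in>Ps. integral\<^sup>L P Z)}"
  by (simp add: mean_interval_def lower_exp_def upper_exp_def Inf_real_def image_image)

lemma cov_P_mixture:
  fixes X Y :: "'a \<Rightarrow> real"
  assumes w: "convex_weights Ps S w"
    and Ps_prob: "\<And>P. P \<in> Ps \<Longrightarrow> prob_space P \<and> sets P = sets M"
    and "X \<in> borel_measurable M" "Y \<in> borel_measurable M"
    and int: "\<And>P. P \<in> Ps \<Longrightarrow> integrable P X \<and> integrable P Y \<and> integrable P (\<lambda>\<omega>. X \<omega> * Y \<omega>)"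
  shows "cov_P (mixture M S w) X Y = mixed_cov S w
    (\<lambda>P. integral\<^sup>L P X) (\<lambda>P. integral\<^sup>L P Y) (\<lambda>P. integral\<^sup>L P (\<lambda>\<omega>. X \<omega> * Y \<omega>))"
proof -
  have S_props: "finite S" "\<And>P. P \<in> S \<Longrightarrow> sets P = sets M" "\<And>P. P \<in> S \<Longrightarrow> 0 \<le> w P"
    and int_S: "\<And>P. P \<in> S \<Longrightarrow> integrable P X \<and> integrable P Y \<and> integrable P (\<lambda>\<omega>. X \<omega> * Y \<omega>)"
    using w Ps_prob int by (auto simp: convex_weights_def)
  have "(\<lambda>\<omega>. X \<omega> * Y \<omega>) \<in> borel_measurable M"
    using assms(3,4) by measurable
  have mix: "integrable (mixture M S w) f \<and> integral\<^sup>L (mixture M S w) f = (\<Sum>P\<in>S. w P * integral\<^sup>L P f)"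
    if "f \<in> borel_measurable M" "\<And>P. P \<in> S \<Longrightarrow> integrable P f" for f :: "'a \<Rightarrow> real"
    using integrable_mixture[of S M w f] integral_mixture[of S M w f] S_props that by blast
  show ?thesis
    using mix[OF assms(3)] mix[OF assms(4)] mix[OF \<open>(\<lambda>\<omega>. X \<omega> * Y \<omega>) \<in> borel_measurable M\<close>] int_S
    by (simp add: cov_P_eq[OF prob_space_mixture[OF w Ps_prob]] mixed_cov_def)
qed

lemma upper_cov_eq_Sup_cov_P:
  fixes M :: "'a measure" and Ps :: "'a measure set" and X Y :: "'a \<Rightarrow> real"
  assumes "Ps \<noteq> {}"
    and Ps_prob: "\<And>P. P \<in> Ps \<Longrightarrow> prob_space P \<and> sets P = sets M"
    and X_meas: "X \<in> borel_measurable M" and Y_meas: "Y \<in> borel_measurable M"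
    and X2_int: "\<And>P. P \<in> Ps \<Longrightarrow> integrable P (\<lambda>\<omega>. (X \<omega>)\<^sup>2)"
    and Y2_int: "\<And>P. P \<in> Ps \<Longrightarrow> integrable P (\<lambda>\<omega>. (Y \<omega>)\<^sup>2)"
    and X2_bdd: "bdd_above ((\<lambda>P. integral\<^sup>L P (\<lambda>\<omega>. (X \<omega>)\<^sup>2)) ` Ps)"
    and Y2_bdd: "bdd_above ((\<lambda>P. integral\<^sup>L P (\<lambda>\<omega>. (Y \<omega>)\<^sup>2)) ` Ps)"
  shows "upper_cov Ps X Y = (SUP P\<in>measure_co M Ps. cov_P P X Y)"
proof -
  obtain BX BY where BX: "\<And>P. P \<in> Ps \<Longrightarrow> integral\<^sup>L P (\<lambda>\<omega>. (X \<omega>)\<^sup>2) \<le> BX"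
    and BY: "\<And>P. P \<in> Ps \<Longrightarrow> integral\<^sup>L P (\<lambda>\<omega>. (Y \<omega>)\<^sup>2) \<le> BY"
    using X2_bdd Y2_bdd by (auto simp: bdd_above_def)
  have P_meas: "X \<in> borel_measurable P" "Y \<in> borel_measurable P" if "P \<in> Ps" for P
    using X_meas Y_meas Ps_prob[OF that] by (simp_all cong: measurable_cong_sets)
  have int: "integrable P X \<and> integrable P Y \<and> integrable P (\<lambda>\<omega>. X \<omega> * Y \<omega>)" if "P \<in> Ps" for P
    using Ps_prob[OF that] X2_int[OF that] Y2_int[OF that] P_meas[OF that]
      integrable_mult_of_square_integrable(1)
    by (auto intro: finite_measure.square_integrable_imp_integrable prob_space.finite_measure)
  define K where "K = 1 + \<bar>BX\<bar> + \<bar>BY\<bar>"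
  have bounded: "\<forall>P\<in>Ps. \<bar>integral\<^sup>L P X\<bar> \<le> K \<and> \<bar>integral\<^sup>L P Y\<bar> \<le> K
      \<and> \<bar>integral\<^sup>L P (\<lambda>\<omega>. X \<omega> * Y \<omega>)\<bar> \<le> K"
  proof
    fix P assume "P \<in> Ps"
    then show "\<bar>integral\<^sup>L P X\<bar> \<le> K \<and> \<bar>integral\<^sup>L P Y\<bar> \<le> K
        \<and> \<bar>integral\<^sup>L P (\<lambda>\<omega>. X \<omega> * Y \<omega>)\<bar> \<le> K"
      using prob_space.abs_expectation_le_second_moment[of P X]
        prob_space.abs_expectation_le_second_moment[of P Y]
        integrable_mult_of_square_integrable(2)[of X P Y]
        Ps_prob P_meas X2_int Y2_int BX BY
      unfolding K_def by fastforce
  qed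
  have "upper_cov Ps X Y = upper_cov_of_moments Ps
      (\<lambda>P. integral\<^sup>L P X) (\<lambda>P. integral\<^sup>L P Y) (\<lambda>P. integral\<^sup>L P (\<lambda>\<omega>. X \<omega> * Y \<omega>))"
    unfolding upper_cov_def upper_cov_of_moments_def mean_interval_eq upper_exp_def using Ps_prob int
    by (intro SUP_cong INF_cong refl) (simp add: prob_space.expectation_shifted_product)
  also have "\<dots> = (SUP (S, w)\<in>{(S, w). convex_weights Ps S w}. mixed_cov S w
      (\<lambda>P. integral\<^sup>L P X) (\<lambda>P. integral\<^sup>L P Y) (\<lambda>P. integral\<^sup>L P (\<lambda>\<omega>. X \<omega> * Y \<omega>)))"
    using \<open>Ps \<noteq> {}\<close> bounded by (rule upper_cov_of_moments_eq_Sup_mixed_cov)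
  also have "\<dots> = (SUP P\<in>measure_co M Ps. cov_P P X Y)"
    unfolding measure_co_eq_image image_image
    using cov_P_mixture[OF _ Ps_prob X_meas Y_meas int] by (intro SUP_cong refl) auto
  finally show ?thesis .
qed

lemma cov_P_uminus_right: "cov_P P X (\<lambda>\<omega>. - Y \<omega>) = - cov_P P X Y"
  by (simp add: cov_P_def flip: integral_minus) (simp add: algebra_simps)

lemma mean_interval_uminus: "mean_interval Ps (\<lambda>\<omega>. - Z \<omega>) = uminus ` mean_interval Ps Z"
  by (simp add: mean_interval_def lower_exp_def)

lemma INF_eq_uminus_SUP_uminus: "(INF x\<in>A. f x) = - (SUP x\<in>A. - f x :: real)"
  by (simp add: Inf_real_def image_image)

lemma lower_cov_eq_uminus_upper_cov: "lower_cov Ps X Y = - upper_cov Ps X (\<lambda>\<omega>. - Y \<omega>)"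
proof -
  have "(\<lambda>\<omega>. (X \<omega> - u) * (- Y \<omega> - - v)) = (\<lambda>\<omega>. - ((X \<omega> - u) * (Y \<omega> - v)))" for u v
    by (simp add: fun_eq_iff algebra_simps)
  then show ?thesis
    unfolding lower_cov_def upper_cov_def mean_interval_uminus image_image
    by (simp add: INF_eq_uminus_SUP_uminus)
qed

theorem theorem3p5:
  fixes M :: "'a measure" and Ps :: "'a measure set" and X Y :: "'a \<Rightarrow> real"
  assumes Ps_ne: "Ps \<noteq> {}"
    and Ps_prob: "\<And>P. P \<in> Ps \<Longrightarrow> prob_space P \<and> sets P = sets M"
    and X_meas: "X \<in> borel_measurable M" and Y_meas: "Y \<in> borel_measurable M"
    and X2_int: "\<And>P. P \<in> Ps \<Longrightarrow> integrable P (\<lambda>\<omega>. (X \<omega>)\<^sup>2)"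
    and Y2_int: "\<And>P. P \<in> Ps \<Longrightarrow> integrable P (\<lambda>\<omega>. (Y \<omega>)\<^sup>2)"
    and X2_bdd: "bdd_above ((\<lambda>P. integral\<^sup>L P (\<lambda>\<omega>. (X \<omega>)\<^sup>2)) ` Ps)"
    and Y2_bdd: "bdd_above ((\<lambda>P. integral\<^sup>L P (\<lambda>\<omega>. (Y \<omega>)\<^sup>2)) ` Ps)"
  shows "upper_cov Ps X Y = (SUP P\<in>measure_co M Ps. cov_P P X Y)
    \<and> lower_cov Ps X Y = (INF P\<in>measure_co M Ps. cov_P P X Y)"
proof
  show "upper_cov Ps X Y = (SUP P\<in>measure_co M Ps. cov_P P X Y)"
    using assms by (rule upper_cov_eq_Sup_cov_P)
  have "upper_cov Ps X (\<lambda>\<omega>. - Y \<omega>) = (SUP P\<in>measure_co M Ps. cov_P P X (\<lambda>\<omega>. - Y \<omega>))"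
    using Ps_ne Ps_prob X_meas _ X2_int _ X2_bdd
    by (rule upper_cov_eq_Sup_cov_P) (use Y_meas Y2_int Y2_bdd in simp_all)
  then show "lower_cov Ps X Y = (INF P\<in>measure_co M Ps. cov_P P X Y)"
    by (simp add: lower_cov_eq_uminus_upper_cov cov_P_uminus_right INF_eq_uminus_SUP_uminus)
qed

end
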